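(* Let $0<\rho_1<1$. There is $\epsilon_0\in(0,1)$ such that for every $0<\epsilon<\epsilon_0$ there is $q_0$ (depending on $\rho_1$ and $\epsilon$) such that the following holds for every prime $q\ge q_0$. Let $S\subseteq\mathbb{Z}/q\mathbb{Z}$ with $|S|\ge\rho_1 q$, and let $h$ be an integer with $1\le h\le q-1$ such that $S'=\{hs\bmod q : s\in S\}$ satisfies: for every integer $a$ with $|a|\le q/2$ and $|f_{S'}(a/q)|>\epsilon|S|$ one has $|a|<q^{1-\rho_1\epsilon^2}$. Let $k$ be an integer, $v$ an integer with $1\le v<q^{\rho_1\epsilon^2/4}$, and $W=W(k,v)$. Let $u$ be real with $5vq^{-\rho_1\epsilon^2}\le|u|\le\frac12$, and let $a$ be an integer with $|u-a/q|\le \frac{1}{2q}$. Then for all integers $N\ge 0$, $H\ge 1$ with $[N+1,N+H]\subseteq[0,q-1]$, $$\left|\sum_{s\in W,\ N+1\le s\le N+H} e\left(\frac{sa}{q}\right)\right|\ <\ 2|S|\left(\frac{\epsilon H}{\rho_1 q}\right)^{1/3}.$$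
   Context: $e(u)=\exp(2\pi i u)$. For a finite set of integers $T$ (subsets of $\mathbb{Z}/q\mathbb{Z}$ being identified with their least nonnegative residues in $\{0,\dots,q-1\}$), $f_T(t)=\sum_{s\in T}e(st)$. Given $S,h$ as in the claim, an integer $k$ and an integer $v$ with $1\le v<q^{\rho_1\epsilon^2/4}$, $W(k,v)\subseteq\{0,1,\dots,q-1\}$ is the set of least nonnegative residues modulo $q$ of the numbers $(4v)^{-1}hs+k$, $s\in S$, where $(4v)^{-1}$ denotes the inverse of $4v$ modulo $q$. *)

theory Defs
  imports "HOL-Analysis.Analysis" "HOL-Number_Theory.Number_Theory"
begin

definition e :: "real \<Rightarrow> complex" where
  "e u = exp (2 * of_real pi * \<i> * of_real u)"

definition fT :: "int set \<Rightarrow> real \<Rightarrow> complex" where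
  "fT T t = (\<Sum>s\<in>T. e (of_int s * t))"

definition W :: "int \<Rightarrow> int set \<Rightarrow> int \<Rightarrow> int \<Rightarrow> int \<Rightarrow> int set" where
  "W q S h k v = (\<lambda>s. (modular_inverse q (4 * v) * h * s + k) mod q) ` S"

end

theory Submission
  imports Defs
begin

(* Write q = 2m + 1 and I = [N+1, N+H]. Orthogonality of the characters modulo q gives
     q * sum_{s in W cap I} e(sa/q) = sum_{|r| <= m} D(r) F(r),
   D(r) = sum_{y in I} e(-ry/q),  F(r) = sum_{x in W} e(x(a+r)/q).
   Trivially |D(r)| <= H, Jordan's inequality gives |D(r)| <= q/(2|r|), and Parseval gives
   sum_r |F(r)|^2 = q|W|. Since W is an affine image of S, |F(r)| is the modulus of the
   exponential sum of S' at b/q for any b with 4vb = a + r (mod q); so the spectral hypothesis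
   gives |F(r)| <= eps|S| unless a + r = 4vb with |b| < q^(1 - rho eps^2), and the lower bound
   on |u| rules this out for |r| <= 1/(rho eps). With theta = (eps H/(rho q))^(1/3), bounding the
   terms with |r| <= R ~ 1/(3 rho theta^2) by these facts and the others by Cauchy-Schwarz
   gives 2|S| theta; when theta^2 < 2 eps the trivial bound H already suffices. *)

section \<open>The additive character\<close>

lemma e_eq_exp_i: "e x = exp (\<i> * of_real (2 * pi * x))"
  unfolding e_def by (rule arg_cong[where f = exp]) (simp add: algebra_simps)

lemma e_add: "e (x + y) = e x * e y"
  unfolding e_def by (simp add: distrib_left exp_add)

lemma e_of_int [simp]: "e (of_int n) = 1"
proof -
  have "\<i> * of_real (2 * pi * of_int n) = \<i> * (of_int n * (of_real pi * 2))"
    by simp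
  then show ?thesis
    unfolding e_eq_exp_i by (simp only: exp_2pi_1_int)
qed

lemma e_0 [simp]: "e 0 = 1"
  by (simp add: e_def)

lemma norm_e [simp]: "norm (e x) = 1"
  unfolding e_eq_exp_i by (rule norm_exp_i_times)

lemma e_of_nat_mult: "e (of_nat n * x) = e x ^ n"
proof -
  have "\<i> * of_real (2 * pi * (of_nat n * x)) = of_nat n * (\<i> * of_real (2 * pi * x))"
    by simp
  then show ?thesis
    unfolding e_eq_exp_i by (simp only: exp_of_nat_mult)
qed

lemma e_minus: "e (- x) = cnj (e x)"
  unfolding e_eq_exp_i exp_cnj by simp

lemma e_eq_1_iff: "e x = 1 \<longleftrightarrow> x \<in> \<int>"
proof
  assume "e x = 1"
  then obtain n :: int where "Im (2 * of_real pi * \<i> * of_real x) = of_int (2 * n) * pi"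
    unfolding e_def exp_eq_1 by blast
  then have "x = of_int n"
    by simp
  then show "x \<in> \<int>"
    by simp
qed (auto elim: Ints_cases)

lemma norm_e_minus_1: "norm (e x - 1) = 2 * \<bar>sin (pi * x)\<bar>"
  unfolding e_eq_exp_i using dist_exp_i_1[of "2 * pi * x"] by simp

lemma e_cong:
  assumes "[x = y] (mod q)"
  shows "e (of_int x / of_int q) = e (of_int y / of_int q)"
proof (cases "q = 0")
  case False
  from assms obtain k where "x = y + q * k"
    by (metis cong_iff_lin cong_sym)
  with False have "of_int x / of_int q = of_int y / of_int q + (of_int k :: real)"
    by (simp add: field_simps)
  then show ?thesis
    by (simp add: e_add)
qed (use assms in \<open>simp add: cong_def\<close>)

lemma Jordan_inequality:
  fixes x :: real
  assumes "0 \<le> x" "x \<le> pi / 2"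
  shows "2 / pi * x \<le> sin x"
proof -
  have "concave_on {0..pi / 2} sin"
    by (rule f''_le0_imp_concave[where f' = cos and f'' = "\<lambda>x. - sin x"])
       (auto intro!: derivative_eq_intros sin_ge_zero)
  then show ?thesis
    using concave_onD_Icc'[of 0 "pi / 2" sin x] assms by simp
qed

section \<open>Exponential sums over intervals and complete residue systems\<close>

lemma fT_minus: "fT X (- t) = cnj (fT X t)"
  unfolding fT_def by (simp add: e_minus[symmetric])

lemma norm_fT_le_card: "norm (fT X t) \<le> card X"
  unfolding fT_def using norm_sum[of "\<lambda>s. e (of_int s * t)" X] by simp

lemma fT_atLeastAtMost:
  "fT {L..U} t = e (of_int L * t) * (\<Sum>j<nat (U - L + 1). e t ^ j)"
proof -
  have "fT {L..U} t = (\<Sum>j<nat (U - L + 1). e (of_int (L + int j) * t))"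
    unfolding fT_def
    by (rule sum.reindex_bij_witness[where i = "\<lambda>j. L + int j" and j = "\<lambda>s. nat (s - L)"]) auto
  also have "\<dots> = (\<Sum>j<nat (U - L + 1). e (of_int L * t) * e t ^ j)"
    by (simp add: distrib_right e_add e_of_nat_mult)
  finally show ?thesis
    by (simp add: sum_distrib_left)
qed

lemma norm_fT_atLeastAtMost_le:
  assumes "0 < \<bar>t\<bar>" "\<bar>t\<bar> \<le> 1 / 2"
  shows "norm (fT {L..U} t) \<le> 1 / (2 * \<bar>t\<bar>)"
proof -
  define n where "n = nat (U - L + 1)"
  have "2 / pi * (pi * \<bar>t\<bar>) \<le> sin (pi * \<bar>t\<bar>)"
    using assms by (intro Jordan_inequality) auto
  moreover have "\<bar>sin (pi * t)\<bar> = \<bar>sin (pi * \<bar>t\<bar>)\<bar>"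
    by (cases "0 \<le> t") simp_all
  ultimately have dist: "4 * \<bar>t\<bar> \<le> norm (e t - 1)"
    by (simp add: norm_e_minus_1)
  then have "e t \<noteq> 1"
    using assms by auto
  then have "norm (fT {L..U} t) = norm (e t ^ n - 1) / norm (e t - 1)"
    by (simp add: fT_atLeastAtMost n_def geometric_sum norm_mult norm_divide)
  also have "\<dots> \<le> 2 / (4 * \<bar>t\<bar>)"
  proof (rule frac_le)
    show "norm (e t ^ n - 1) \<le> 2"
      using norm_triangle_ineq4[of "e t ^ n" 1] by (simp add: norm_power)
  qed (use assms dist in auto)
  finally show ?thesis
    by simp
qed

lemma fT_symmetric_residues:
  assumes q: "q = 2 * m + 1" "0 \<le> m"
  shows "fT {-m..m} (of_int d / of_int q) = (if q dvd d then of_int q else 0)"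
proof (cases "q dvd d")
  case True
  then obtain n where "d = q * n" ..
  have "e (of_int s * (of_int d / of_int q)) = 1" for s
  proof -
    have "of_int s * (of_int d / of_int q) = (of_int (s * n) :: real)"
      using q \<open>d = q * n\<close> by simp
    then show ?thesis
      by (metis e_of_int)
  qed
  then have "fT {-m..m} (of_int d / of_int q) = of_nat (card {-m..m})"
    by (simp add: fT_def)
  with True q show ?thesis
    by simp
next
  case False
  define z where "z = e (of_int d / of_int q)"
  have "z \<noteq> 1"
  proof
    assume "z = 1"
    then obtain n where "of_int d / of_int q = (of_int n :: real)"
      unfolding z_def e_eq_1_iff by (auto elim: Ints_cases)
    with q have "real_of_int d = real_of_int (q * n)"
      by (simp add: field_simps)
    then have "d = q * n"
      by (rule of_int_eq_iff[THEN iffD1])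
    with False show False
      by simp
  qed
  moreover have "z ^ nat q = 1"
    using q by (simp add: z_def e_of_nat_mult[symmetric])
  ultimately have "(\<Sum>j<nat q. z ^ j) = 0"
    by (simp add: geometric_sum)
  moreover have "nat (m - - m + 1) = nat q"
    using q by simp
  ultimately show ?thesis
    using False by (simp add: fT_atLeastAtMost z_def)
qed

lemma norm_fT_atLeastAtMost_residue_le:
  assumes "q = 2 * m + 1" "r \<in> {-m..m}" "r \<noteq> 0"
  shows "norm (fT {L..U} (- of_int r / of_int q)) \<le> of_int q / (2 * \<bar>of_int r\<bar>)"
proof -
  have "0 < \<bar>- of_int r / real_of_int q\<bar>" "\<bar>- of_int r / real_of_int q\<bar> \<le> 1 / 2"
    using assms by (auto simp: field_simps)
  from norm_fT_atLeastAtMost_le[OF this] show ?thesis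
    using assms by (simp add: field_simps)
qed

lemma fT_symmetric_residues_diff:
  assumes q: "q = 2 * m + 1" "0 \<le> m" and xy: "x \<in> {0..<q}" "y \<in> {0..<q}"
  shows "fT {-m..m} (of_int (x - y) / of_int q) = (if x = y then of_int q else 0)"
proof -
  from xy have "q dvd x - y \<longleftrightarrow> x = y"
    using cong_less_imp_eq_int[of x q y] by (auto simp: cong_iff_dvd_diff[symmetric])
  with fT_symmetric_residues[OF q, of "x - y"] show ?thesis
    by simp
qed

lemma sum_fT_mult_fT:
  assumes q: "q = 2 * m + 1" "0 \<le> m" and X: "X \<subseteq> {0..<q}" and Y: "Y \<subseteq> {0..<q}"
  shows "(\<Sum>r\<in>{-m..m}. fT X (of_int (\<alpha> + r) / of_int q) * fT Y (of_int (\<beta> - r) / of_int q))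
       = of_int q * fT (X \<inter> Y) (of_int (\<alpha> + \<beta>) / of_int q)"
proof -
  have q0: "of_int q \<noteq> (0 :: real)"
    using q by simp
  have fin: "finite X" "finite Y"
    using X Y by (auto intro: finite_subset)
  define c where "c x y = e (of_int (x * \<alpha> + y * \<beta>) / of_int q)" for x y
  have "fT X (of_int (\<alpha> + r) / of_int q) * fT Y (of_int (\<beta> - r) / of_int q)
      = (\<Sum>x\<in>X. \<Sum>y\<in>Y. c x y * e (of_int r * (of_int (x - y) / of_int q)))" for r
    unfolding fT_def sum_product
  proof (intro sum.cong refl)
    fix x y
    have "of_int x * (of_int (\<alpha> + r) / of_int q) + of_int y * (of_int (\<beta> - r) / of_int q)
        = of_int (x * \<alpha> + y * \<beta>) / of_int q + of_int r * (of_int (x - y) / of_int q :: real)"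
      using q0 by (simp add: field_simps)
    then show "e (of_int x * (of_int (\<alpha> + r) / of_int q)) * e (of_int y * (of_int (\<beta> - r) / of_int q))
        = c x y * e (of_int r * (of_int (x - y) / of_int q))"
      unfolding c_def e_add[symmetric] by simp
  qed
  then have "(\<Sum>r\<in>{-m..m}. fT X (of_int (\<alpha> + r) / of_int q) * fT Y (of_int (\<beta> - r) / of_int q))
      = (\<Sum>r\<in>{-m..m}. \<Sum>x\<in>X. \<Sum>y\<in>Y. c x y * e (of_int r * (of_int (x - y) / of_int q)))"
    by simp
  also have "\<dots> = (\<Sum>x\<in>X. \<Sum>r\<in>{-m..m}. \<Sum>y\<in>Y. c x y * e (of_int r * (of_int (x - y) / of_int q)))"
    by (rule sum.swap)
  also have "\<dots> = (\<Sum>x\<in>X. \<Sum>y\<in>Y. \<Sum>r\<in>{-m..m}. c x y * e (of_int r * (of_int (x - y) / of_int q)))"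
    by (intro sum.cong refl sum.swap)
  also have "\<dots> = (\<Sum>x\<in>X. \<Sum>y\<in>Y. c x y * fT {-m..m} (of_int (x - y) / of_int q))"
    unfolding fT_def by (simp add: sum_distrib_left)
  also have "\<dots> = (\<Sum>x\<in>X. \<Sum>y\<in>Y. if x = y then of_int q * c x x else 0)"
  proof (intro sum.cong refl)
    fix x y
    assume "x \<in> X" "y \<in> Y"
    with X Y have "x \<in> {0..<q}" "y \<in> {0..<q}"
      by auto
    then show "c x y * fT {-m..m} (of_int (x - y) / of_int q) = (if x = y then of_int q * c x x else 0)"
      using fT_symmetric_residues_diff[OF q] by simp
  qed
  also have "\<dots> = of_int q * (\<Sum>x\<in>X \<inter> Y. c x x)"
    using fin by (simp add: sum.inter_restrict sum_distrib_left if_distrib[of "\<lambda>z. _ * z"] cong: if_cong)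
  also have "(\<Sum>x\<in>X \<inter> Y. c x x) = fT (X \<inter> Y) (of_int (\<alpha> + \<beta>) / of_int q)"
    unfolding fT_def c_def by (simp add: algebra_simps)
  finally show ?thesis .
qed

lemma sum_norm_fT_square:
  assumes "q = 2 * m + 1" "0 \<le> m" "X \<subseteq> {0..<q}"
  shows "(\<Sum>r\<in>{-m..m}. (norm (fT X (of_int (\<alpha> + r) / of_int q)))\<^sup>2) = of_int q * card X"
proof -
  have "fT X (of_int (- \<alpha> - r) / of_int q) = cnj (fT X (of_int (\<alpha> + r) / of_int q))" for r
    using fT_minus[of X "of_int (\<alpha> + r) / of_int q"] by (simp add: minus_divide_left)
  moreover have "complex_of_real (\<Sum>r\<in>{-m..m}. (norm (fT X (of_int (\<alpha> + r) / of_int q)))\<^sup>2)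
      = (\<Sum>r\<in>{-m..m}. fT X (of_int (\<alpha> + r) / of_int q) * cnj (fT X (of_int (\<alpha> + r) / of_int q)))"
    by (simp only: of_real_sum complex_norm_square)
  ultimately have "complex_of_real (\<Sum>r\<in>{-m..m}. (norm (fT X (of_int (\<alpha> + r) / of_int q)))\<^sup>2)
      = (\<Sum>r\<in>{-m..m}. fT X (of_int (\<alpha> + r) / of_int q) * fT X (of_int (- \<alpha> - r) / of_int q))"
    by simp
  also have "\<dots> = of_int q * fT X 0"
    using sum_fT_mult_fT[OF assms(1-3) assms(3), of \<alpha> "- \<alpha>"] by simp
  also have "\<dots> = complex_of_real (of_int q * card X)"
    by (simp add: fT_def)
  finally show ?thesis
    by (simp only: of_real_eq_iff)
qed

section \<open>Exponential sums over affine images\<close>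

lemma fT_image_mod:
  assumes "inj_on (\<lambda>s. f s mod q) S"
  shows "fT ((\<lambda>s. f s mod q) ` S) (of_int t / of_int q) = (\<Sum>s\<in>S. e (of_int (f s * t) / of_int q))"
  unfolding fT_def sum.reindex[OF assms] o_def
proof (rule sum.cong[OF refl])
  fix s
  have "[f s mod q * t = f s * t] (mod q)"
    by (simp add: cong_def mod_mult_left_eq)
  from e_cong[OF this] show "e (of_int (f s mod q) * (of_int t / of_int q)) = e (of_int (f s * t) / of_int q)"
    by simp
qed

lemma inj_on_affine_mod:
  fixes q c k :: int
  assumes "prime q" "\<not> q dvd c" "S \<subseteq> {0..<q}"
  shows "inj_on (\<lambda>s. (c * s + k) mod q) S"
proof (rule inj_onI)
  fix x y
  assume "x \<in> S" "y \<in> S" "(c * x + k) mod q = (c * y + k) mod q"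
  then have "q dvd c * (x - y)"
    by (simp add: mod_eq_dvd_iff algebra_simps)
  with assms(1,2) have "[x = y] (mod q)"
    by (simp add: prime_dvd_mult_iff cong_iff_dvd_diff)
  moreover have "0 \<le> x" "x < q" "0 \<le> y" "y < q"
    using \<open>x \<in> S\<close> \<open>y \<in> S\<close> assms(3) by auto
  ultimately show "x = y"
    by (simp add: cong_less_imp_eq_int)
qed

lemma cong_mult_solvable_balanced:
  fixes a t q :: int
  assumes "coprime a q" "0 < q"
  obtains b where "2 * \<bar>b\<bar> \<le> q" "[a * b = t] (mod q)"
proof -
  define b0 where "b0 = modular_inverse q a * t mod q"
  have "[a * b0 = a * modular_inverse q a * t] (mod q)"
    unfolding b0_def by (simp add: cong_def mod_mult_right_eq mult.assoc)
  also have "[a * modular_inverse q a * t = 1 * t] (mod q)"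
    using cong_modular_inverse1[OF assms(1)] by (rule cong_mult) (rule cong_refl)
  finally have b0: "[a * b0 = t] (mod q)"
    by simp
  have "0 \<le> b0" "b0 < q"
    using assms(2) by (simp_all add: b0_def)
  show ?thesis
  proof (cases "2 * b0 \<le> q")
    case True
    with \<open>0 \<le> b0\<close> b0 show ?thesis
      by (intro that[of b0]) auto
  next
    case False
    have "[a * (b0 - q) = a * b0] (mod q)"
      unfolding cong_iff_lin by (intro exI[of _ a]) (simp add: algebra_simps)
    from cong_trans[OF this b0] False \<open>b0 < q\<close> show ?thesis
      by (intro that[of "b0 - q"]) auto
  qed
qed

lemma not_dvd_modular_inverse:
  fixes a q :: int
  assumes "prime q" "\<not> q dvd a"
  shows "\<not> q dvd modular_inverse q a"
proof
  assume "q dvd modular_inverse q a"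
  then have "q dvd modular_inverse q a * a"
    by simp
  moreover have "coprime a q"
    using assms by (metis coprime_commute prime_imp_coprime)
  ultimately have "q dvd 1"
    using cong_modular_inverse2 by (metis cong_dvd_iff)
  with prime_gt_1_int[OF assms(1)] show False
    by simp
qed

lemma modular_inverse_mult_cong:
  fixes a b t q :: int
  assumes "coprime a q" "[a * b = t] (mod q)"
  shows "[modular_inverse q a * t = b] (mod q)"
proof -
  have "[modular_inverse q a * t = modular_inverse q a * a * b] (mod q)"
    using cong_scalar_left[OF cong_sym[OF assms(2)], of "modular_inverse q a"] by (simp add: mult.assoc)
  also have "[modular_inverse q a * a * b = 1 * b] (mod q)"
    using cong_modular_inverse2[OF assms(1)] by (rule cong_mult) (rule cong_refl)
  finally show ?thesis
    by simp
qed

lemma norm_fT_W: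
  assumes q: "prime q" and S: "S \<subseteq> {0..<q}" and h: "\<not> q dvd h" and v: "\<not> q dvd 4 * v"
    and b: "[4 * v * b = t] (mod q)"
  shows "norm (fT (W q S h k v) (of_int t / of_int q))
       = norm (fT ((\<lambda>s. h * s mod q) ` S) (of_int b / of_int q))"
proof -
  define c where "c = modular_inverse q (4 * v)"
  have "coprime (4 * v) q"
    using q v by (metis coprime_commute prime_imp_coprime)
  then have ct: "[c * t = b] (mod q)"
    unfolding c_def using b by (rule modular_inverse_mult_cong)
  have ch: "\<not> q dvd c * h"
    using q h not_dvd_modular_inverse[OF q v] by (simp add: c_def prime_dvd_mult_iff)
  have "fT (W q S h k v) (of_int t / of_int q) = (\<Sum>s\<in>S. e (of_int ((c * h * s + k) * t) / of_int q))"
    unfolding W_def c_def[symmetric]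
    by (rule fT_image_mod[where f = "\<lambda>s. c * h * s + k"]) (rule inj_on_affine_mod[OF q ch S])
  also have "\<dots> = (\<Sum>s\<in>S. e (of_int (k * t) / of_int q) * e (of_int (h * s * b) / of_int q))"
  proof (rule sum.cong[OF refl])
    fix s
    have "[(c * h * s + k) * t = k * t + h * s * (c * t)] (mod q)"
      by (simp add: algebra_simps)
    also have "[k * t + h * s * (c * t) = k * t + h * s * b] (mod q)"
      using ct by (intro cong_add cong_mult) auto
    finally have "e (of_int ((c * h * s + k) * t) / of_int q) = e (of_int (k * t + h * s * b) / of_int q)"
      by (rule e_cong)
    then show "e (of_int ((c * h * s + k) * t) / of_int q)
        = e (of_int (k * t) / of_int q) * e (of_int (h * s * b) / of_int q)"
      by (simp add: add_divide_distrib e_add)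
  qed
  also have "\<dots> = e (of_int (k * t) / of_int q) * fT ((\<lambda>s. h * s mod q) ` S) (of_int b / of_int q)"
    using fT_image_mod[of "\<lambda>s. h * s" q S b] inj_on_affine_mod[OF q h S, of 0]
    by (simp add: sum_distrib_left)
  finally show ?thesis
    by (simp add: norm_mult)
qed

lemma large_fT_W_imp_cong:
  fixes Q \<delta> :: real
  assumes q: "prime q" and S: "S \<subseteq> {0..<q}" and h: "\<not> q dvd h" and v: "\<not> q dvd 4 * v"
    and spectrum: "\<forall>b::int. \<bar>real_of_int b\<bar> \<le> real_of_int q / 2 \<and>
        cmod (fT ((\<lambda>s. h * s mod q) ` S) (of_int b / of_int q)) > \<delta> \<longrightarrow> \<bar>of_int b\<bar> < Q"
    and large: "norm (fT (W q S h k v) (of_int t / of_int q)) > \<delta>"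
  obtains b where "\<bar>of_int b\<bar> < Q" "[4 * v * b = t] (mod q)"
proof -
  have "coprime (4 * v) q"
    using q v by (metis coprime_commute prime_imp_coprime)
  then obtain b where b: "2 * \<bar>b\<bar> \<le> q" "[4 * v * b = t] (mod q)"
    using cong_mult_solvable_balanced prime_gt_0_int[OF q] by metis
  with norm_fT_W[OF q S h v b(2)] large spectrum have "\<bar>of_int b\<bar> < Q"
    by auto
  with b show ?thesis
    by (intro that)
qed

lemma norm_fT_W_shift_le:
  fixes Q \<delta> :: real
  assumes q: "prime q" and S: "S \<subseteq> {0..<q}" and h: "\<not> q dvd h" and v: "\<not> q dvd 4 * v" "0 < v"
    and spectrum: "\<forall>b::int. \<bar>real_of_int b\<bar> \<le> real_of_int q / 2 \<and>
        cmod (fT ((\<lambda>s. h * s mod q) ` S) (of_int b / of_int q)) > \<delta> \<longrightarrow> \<bar>of_int b\<bar> < Q"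
    and far: "4 * of_int v * Q + \<bar>of_int r\<bar> < \<bar>of_int a\<bar>"
    and small: "\<bar>of_int a\<bar> + \<bar>of_int r\<bar> + 4 * of_int v * Q < of_int q"
  shows "norm (fT (W q S h k v) (of_int (a + r) / of_int q)) \<le> \<delta>"
proof (rule ccontr)
  assume "\<not> ?thesis"
  then obtain b where b: "\<bar>of_int b\<bar> < Q" "[4 * v * b = a + r] (mod q)"
    using large_fT_W_imp_cong[OF q S h v(1) spectrum, of k "a + r"] by force
  have vb: "4 * of_int v * \<bar>of_int b\<bar> \<le> 4 * of_int v * Q"
    using b(1) v(2) by simp
  have abs_4vb: "\<bar>of_int (4 * v * b)\<bar> = 4 * of_int v * \<bar>of_int b :: real\<bar>"
    using v(2) by (simp add: abs_mult)
  then have "\<bar>of_int (a + r - 4 * v * b)\<bar> < (of_int q :: real)"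
    using small vb by (simp only: of_int_add of_int_diff)
  then have "\<bar>a + r - 4 * v * b\<bar> < q"
    by (metis of_int_abs of_int_less_iff)
  moreover have "q dvd a + r - 4 * v * b"
    using cong_sym[OF b(2)] by (simp add: cong_iff_dvd_diff)
  ultimately have "a + r - 4 * v * b = 0"
    using dvd_imp_le_int[of "a + r - 4 * v * b" q] by linarith
  then have "a = 4 * v * b - r"
    by linarith
  then have "real_of_int a = of_int (4 * v * b) - of_int r"
    by simp
  then have "\<bar>real_of_int a\<bar> \<le> \<bar>of_int (4 * v * b)\<bar> + \<bar>of_int r\<bar>"
    using abs_triangle_ineq4[of "real_of_int (4 * v * b)" "of_int r"] by simp
  with abs_4vb far vb show False
    by linarith
qed

section \<open>Splitting a bilinear sum into head and tail\<close>

lemma sum_inverse_square_tail_le: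
  fixes R M :: nat
  assumes "1 \<le> R"
  shows "(\<Sum>j\<in>{R<..M}. 1 / (real j)\<^sup>2) \<le> 1 / real R"
proof (cases "R \<le> M")
  case True
  then have "(\<Sum>j\<in>{R<..M}. 1 / (real j)\<^sup>2) \<le> 1 / real R - 1 / real M"
  proof (induction M rule: dec_induct)
    case (step n)
    have n: "1 \<le> real n"
      using step.hyps assms by simp
    have "1 / (real (Suc n))\<^sup>2 \<le> 1 / (real n * real (Suc n))"
      using n by (intro frac_le) (auto simp: power2_eq_square intro: mult_right_mono)
    also have "\<dots> = 1 / real n - 1 / real (Suc n)"
      using n by (simp add: field_simps)
    finally have "1 / (real (Suc n))\<^sup>2 \<le> 1 / real n - 1 / real (Suc n)" .
    moreover have "{R<..Suc n} = insert (Suc n) {R<..n}"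
      using step.hyps by auto
    ultimately show ?case
      using step.IH by simp
  qed simp
  moreover have "0 \<le> 1 / real M"
    by simp
  ultimately show ?thesis
    by linarith
qed simp

lemma sum_inverse_square_int_tail_le:
  fixes R :: nat and m :: int
  assumes "1 \<le> R"
  shows "(\<Sum>r\<in>{r\<in>{-m..m}. int R < \<bar>r\<bar>}. 1 / (of_int r)\<^sup>2) \<le> 2 / real R"
proof -
  have pos: "(\<Sum>r\<in>{r\<in>{-m..m}. int R < r}. 1 / (real_of_int r)\<^sup>2) = (\<Sum>j\<in>{R<..nat m}. 1 / (real j)\<^sup>2)"
    by (rule sum.reindex_bij_witness[where i = int and j = nat]) auto
  have neg: "(\<Sum>r\<in>{r\<in>{-m..m}. r < - int R}. 1 / (real_of_int r)\<^sup>2) = (\<Sum>j\<in>{R<..nat m}. 1 / (real j)\<^sup>2)"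
    by (rule sum.reindex_bij_witness[where i = "\<lambda>j. - int j" and j = "\<lambda>r. nat (- r)"]) auto
  have "{r\<in>{-m..m}. int R < \<bar>r\<bar>} = {r\<in>{-m..m}. int R < r} \<union> {r\<in>{-m..m}. r < - int R}"
    by auto
  then have "(\<Sum>r\<in>{r\<in>{-m..m}. int R < \<bar>r\<bar>}. 1 / (real_of_int r)\<^sup>2)
      = (\<Sum>r\<in>{r\<in>{-m..m}. int R < r}. 1 / (real_of_int r)\<^sup>2)
        + (\<Sum>r\<in>{r\<in>{-m..m}. r < - int R}. 1 / (real_of_int r)\<^sup>2)"
    by (simp only:) (rule sum.union_disjoint; auto intro: finite_subset[of _ "{-m..m}"])
  with pos neg sum_inverse_square_tail_le[OF assms, of "nat m"] show ?thesis
    by simp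
qed

lemma sum_norm_mult_tail_le:
  fixes D F :: "int \<Rightarrow> 'a::real_normed_vector" and m :: int and R :: nat and q B :: real
  assumes "1 \<le> R" "0 \<le> q"
    and D_decay: "\<And>r. r \<in> {-m..m} \<Longrightarrow> r \<noteq> 0 \<Longrightarrow> norm (D r) \<le> q / (2 * \<bar>of_int r\<bar>)"
    and F_square: "(\<Sum>r\<in>{-m..m}. (norm (F r))\<^sup>2) \<le> B"
  shows "(\<Sum>r\<in>{r\<in>{-m..m}. int R < \<bar>r\<bar>}. norm (D r) * norm (F r)) \<le> q * sqrt (B / (2 * real R))"
proof -
  define T where "T = {r\<in>{-m..m}. int R < \<bar>r\<bar>}"
  have "(\<Sum>r\<in>T. (norm (D r))\<^sup>2) \<le> (\<Sum>r\<in>T. q\<^sup>2 / 4 * (1 / (of_int r)\<^sup>2))"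
  proof (rule sum_mono)
    fix r
    assume "r \<in> T"
    then have "norm (D r) \<le> q / (2 * \<bar>of_int r\<bar>)"
      using D_decay by (auto simp: T_def)
    then have "(norm (D r))\<^sup>2 \<le> (q / (2 * \<bar>of_int r\<bar>))\<^sup>2"
      by (intro power_mono) auto
    then show "(norm (D r))\<^sup>2 \<le> q\<^sup>2 / 4 * (1 / (of_int r)\<^sup>2)"
      by (simp add: power_divide power_mult_distrib)
  qed
  also have "\<dots> \<le> q\<^sup>2 / 4 * (2 / real R)"
    unfolding T_def sum_distrib_left[symmetric]
    by (intro mult_left_mono sum_inverse_square_int_tail_le assms) auto
  finally have D_square: "(\<Sum>r\<in>T. (norm (D r))\<^sup>2) \<le> q\<^sup>2 / (2 * real R)"
    by simp
  have "(\<Sum>r\<in>T. (norm (F r))\<^sup>2) \<le> (\<Sum>r\<in>{-m..m}. (norm (F r))\<^sup>2)"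
    by (rule sum_mono2) (auto simp: T_def)
  with F_square have F_square': "(\<Sum>r\<in>T. (norm (F r))\<^sup>2) \<le> B"
    by linarith
  have "(\<Sum>r\<in>T. norm (D r) * norm (F r)) \<le> sqrt ((\<Sum>r\<in>T. (norm (D r))\<^sup>2) * (\<Sum>r\<in>T. (norm (F r))\<^sup>2))"
    by (rule real_le_rsqrt) (rule Cauchy_Schwarz_ineq_sum)
  also have "\<dots> \<le> sqrt (q\<^sup>2 / (2 * real R) * B)"
    by (intro real_sqrt_le_mono mult_mono D_square F_square') (auto intro: sum_nonneg)
  also have "\<dots> = q * sqrt (B / (2 * real R))"
    using assms(2) by (simp add: real_sqrt_mult real_sqrt_divide)
  finally show ?thesis
    unfolding T_def .
qed

lemma sum_norm_mult_le_head_tail: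
  fixes D F :: "int \<Rightarrow> 'a::real_normed_vector" and m :: int and R :: nat and q H \<delta> B :: real
  assumes "0 \<le> m" "1 \<le> R" "0 \<le> q"
    and D_le: "\<And>r. r \<in> {-m..m} \<Longrightarrow> norm (D r) \<le> H"
    and D_decay: "\<And>r. r \<in> {-m..m} \<Longrightarrow> r \<noteq> 0 \<Longrightarrow> norm (D r) \<le> q / (2 * \<bar>of_int r\<bar>)"
    and F_le: "\<And>r. \<bar>r\<bar> \<le> int R \<Longrightarrow> norm (F r) \<le> \<delta>"
    and F_square: "(\<Sum>r\<in>{-m..m}. (norm (F r))\<^sup>2) \<le> B"
  shows "(\<Sum>r\<in>{-m..m}. norm (D r) * norm (F r)) \<le> (2 * real R + 1) * H * \<delta> + q * sqrt (B / (2 * real R))"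
proof -
  define Hd T where "Hd = {r\<in>{-m..m}. \<bar>r\<bar> \<le> int R}" and "T = {r\<in>{-m..m}. int R < \<bar>r\<bar>}"
  have "norm (D 0) \<le> H" "norm (F 0) \<le> \<delta>"
    using assms(1) by (auto intro: D_le F_le)
  then have "0 \<le> H" "0 \<le> \<delta>"
    using norm_ge_zero[of "D 0"] norm_ge_zero[of "F 0"] by linarith+
  have "(\<Sum>r\<in>Hd. norm (D r) * norm (F r)) \<le> (\<Sum>r\<in>Hd. H * \<delta>)"
    using \<open>0 \<le> H\<close> by (intro sum_mono mult_mono) (auto simp: Hd_def intro: D_le F_le)
  also have "\<dots> \<le> (2 * real R + 1) * H * \<delta>"
  proof -
    have "card Hd \<le> card {- int R..int R}"
      by (intro card_mono) (auto simp: Hd_def)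
    then have "real (card Hd) \<le> 2 * R + 1"
      by simp
    with \<open>0 \<le> H\<close> \<open>0 \<le> \<delta>\<close> show ?thesis
      by (simp add: mult_right_mono mult.assoc)
  qed
  finally have head: "(\<Sum>r\<in>Hd. norm (D r) * norm (F r)) \<le> (2 * real R + 1) * H * \<delta>" .
  have tail: "(\<Sum>r\<in>T. norm (D r) * norm (F r)) \<le> q * sqrt (B / (2 * real R))"
    unfolding T_def using assms(2,3) D_decay F_square by (rule sum_norm_mult_tail_le)
  have split: "{-m..m} = Hd \<union> T"
    by (auto simp: Hd_def T_def)
  have "(\<Sum>r\<in>{-m..m}. norm (D r) * norm (F r))
      = (\<Sum>r\<in>Hd. norm (D r) * norm (F r)) + (\<Sum>r\<in>T. norm (D r) * norm (F r))"
    unfolding split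
    by (rule sum.union_disjoint) (auto simp: Hd_def T_def intro: finite_subset[of _ "{-m..m}"])
  with head tail show ?thesis
    by linarith
qed

lemma head_estimate_le:
  fixes \<rho> \<sigma> q \<theta> H \<epsilon> :: real and R :: nat
  assumes "0 < \<rho>" "0 < q" "0 \<le> \<sigma>" "0 < \<theta>"
    and H: "H * \<epsilon> = \<rho> * q * \<theta> ^ 3" and R: "R \<le> 1 / (3 * \<rho> * \<theta>\<^sup>2) + 1"
  shows "(2 * real R + 1) * H * (\<epsilon> * \<sigma>) \<le> (2 / 3 + 3 * \<rho> * \<theta>\<^sup>2) * (\<theta> * \<sigma> * q)"
proof -
  have "(2 * real R + 1) * H * (\<epsilon> * \<sigma>) = (2 * real R + 1) * (H * \<epsilon>) * \<sigma>"
    by (simp add: algebra_simps)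
  also have "\<dots> = (2 * real R + 1) * (\<rho> * q * \<theta> ^ 3) * \<sigma>"
    by (simp only: H)
  also have "\<dots> \<le> (2 / (3 * \<rho> * \<theta>\<^sup>2) + 3) * (\<rho> * q * \<theta> ^ 3) * \<sigma>"
    using assms by (intro mult_right_mono) auto
  also have "\<dots> = (2 / 3 + 3 * \<rho> * \<theta>\<^sup>2) * (\<theta> * \<sigma> * q)"
    using assms(1,4) by (simp add: field_simps power2_eq_square power3_eq_cube)
  finally show ?thesis .
qed

lemma tail_estimate_le:
  fixes \<rho> \<sigma> q \<theta> :: real and R :: nat
  assumes "0 < \<rho>" "0 < q" "\<rho> * q \<le> \<sigma>" "0 < \<theta>" and R: "1 / (3 * \<rho> * \<theta>\<^sup>2) \<le> R"
  shows "q * sqrt (q * \<sigma> / (2 * real R)) \<le> 5 / 4 * (\<theta> * \<sigma> * q)"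
proof -
  have "0 < \<rho> * q"
    using assms(1,2) by simp
  with assms(3) have \<sigma>: "0 < \<sigma>"
    by linarith
  have y: "0 < 1 / (3 * \<rho> * \<theta>\<^sup>2)"
    using assms(1,4) by simp
  with R have "0 < real R"
    by linarith
  with R y assms(2) \<sigma> have "q * \<sigma> / (2 * real R) \<le> q * \<sigma> / (2 * (1 / (3 * \<rho> * \<theta>\<^sup>2)))"
    by (intro divide_left_mono mult_pos_pos) auto
  also have "\<dots> = 3 / 2 * \<theta>\<^sup>2 * \<sigma> * (\<rho> * q)"
    using assms(1,4) by (simp add: field_simps)
  also have "\<dots> \<le> 3 / 2 * \<theta>\<^sup>2 * \<sigma> * \<sigma>"
    using assms(3) \<sigma> by (intro mult_left_mono) auto
  also have "\<dots> \<le> (5 / 4 * \<theta> * \<sigma>)\<^sup>2"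
    using \<sigma> by (simp add: power2_eq_square)
  finally have "sqrt (q * \<sigma> / (2 * real R)) \<le> 5 / 4 * \<theta> * \<sigma>"
    using assms(4) \<sigma> by (intro real_le_lsqrt) auto
  then show ?thesis
    using assms(2) by (simp add: mult.commute mult_left_mono)
qed

lemma head_tail_estimate_lt:
  fixes \<rho> \<sigma> q \<theta> H \<epsilon> :: real and R :: nat
  assumes rho: "0 < \<rho>" "\<rho> < 1" and q: "0 < q" "\<rho> * q \<le> \<sigma>" and theta: "0 < \<theta>" "\<theta> < 1 / 20"
    and H: "H * \<epsilon> = \<rho> * q * \<theta> ^ 3"
    and R: "1 / (3 * \<rho> * \<theta>\<^sup>2) \<le> R" "R \<le> 1 / (3 * \<rho> * \<theta>\<^sup>2) + 1"
  shows "(2 * real R + 1) * H * (\<epsilon> * \<sigma>) + q * sqrt (q * \<sigma> / (2 * real R)) < 2 * \<sigma> * \<theta> * q"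
proof -
  have "0 < \<rho> * q"
    using rho(1) q(1) by simp
  with q(2) have "0 < \<sigma>"
    by linarith
  with theta(1) q(1) have P: "0 < \<theta> * \<sigma> * q"
    by simp
  have "\<theta> * \<theta> \<le> 1 / 20 * (1 / 20)"
    using theta by (intro mult_mono) auto
  moreover have "\<rho> * (\<theta> * \<theta>) \<le> \<theta> * \<theta>"
    using rho theta(1) by (intro mult_left_le_one_le) auto
  ultimately have "2 / 3 + 3 * \<rho> * \<theta>\<^sup>2 + 5 / 4 < 2"
    unfolding power2_eq_square by linarith
  have "(2 * real R + 1) * H * (\<epsilon> * \<sigma>) + q * sqrt (q * \<sigma> / (2 * real R))
      \<le> (2 / 3 + 3 * \<rho> * \<theta>\<^sup>2) * (\<theta> * \<sigma> * q) + 5 / 4 * (\<theta> * \<sigma> * q)"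
    using head_estimate_le[OF rho(1) q(1) less_imp_le[OF \<open>0 < \<sigma>\<close>] theta(1) H R(2)] tail_estimate_le[OF rho(1) q theta(1) R(1)]
    by (rule add_mono)
  also have "\<dots> < 2 * (\<theta> * \<sigma> * q)"
    using mult_strict_right_mono[OF \<open>2 / 3 + 3 * \<rho> * \<theta>\<^sup>2 + 5 / 4 < 2\<close> P] by (simp add: algebra_simps)
  finally show ?thesis
    by (simp add: algebra_simps)
qed

lemma le_powr_if_powr_inverse_le:
  fixes K x p :: real
  assumes "0 < p" "0 \<le> K" "K powr (1 / p) \<le> x"
  shows "K \<le> x powr p"
proof -
  have "K = (K powr (1 / p)) powr p"
    using assms(1,2) by (simp add: powr_powr)
  also have "\<dots> \<le> x powr p"
    using assms by (intro powr_mono2) auto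
  finally show ?thesis .
qed

(* The hypotheses of the theorem for fixed rho, eps and q; the threshold q_0 enters only
   through q_large. *)
locale W_sum_setting =
  fixes \<rho> \<epsilon> u :: real and q h k v a N H :: int and S :: "int set"
  assumes rho: "0 < \<rho>" "\<rho> < 1"
    and eps: "0 < \<epsilon>" "\<epsilon> < \<rho> / 10000"
    and q_prime: "prime q"
    and q_large: "4 / (\<rho> * \<epsilon>) \<le> of_int q powr (3 * (\<rho> * \<epsilon>\<^sup>2) / 4)"
    and S: "S \<subseteq> {0..<q}" "real (card S) \<ge> \<rho> * of_int q"
    and h: "1 \<le> h" "h \<le> q - 1"
    and spectrum: "\<forall>b::int. \<bar>real_of_int b\<bar> \<le> real_of_int q / 2 \<and>
        cmod (fT ((\<lambda>s. (h * s) mod q) ` S) (of_int b / of_int q)) > \<epsilon> * real (card S)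
        \<longrightarrow> \<bar>of_int b\<bar> < (of_int q) powr (1 - \<rho> * \<epsilon>\<^sup>2)"
    and v: "1 \<le> v" "of_int v < (of_int q) powr (\<rho> * \<epsilon>\<^sup>2 / 4)"
    and u: "5 * of_int v * (of_int q) powr (- \<rho> * \<epsilon>\<^sup>2) \<le> \<bar>u\<bar>" "\<bar>u\<bar> \<le> 1/2"
      "\<bar>u - of_int a / of_int q\<bar> \<le> 1 / (2 * of_int q)"
    and interval: "0 \<le> N" "1 \<le> H" "N + H \<le> q - 1"
begin

abbreviation Q :: real where
  "Q \<equiv> of_int q powr (1 - \<rho> * \<epsilon>\<^sup>2)"

lemma q_pos: "0 < q"
  using prime_gt_0_int[OF q_prime] .

lemma rho_eps_small: "\<rho> * \<epsilon> < 1 / 10000"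
proof -
  have "\<rho> * \<epsilon> \<le> 1 * \<epsilon>"
    using rho eps by (intro mult_right_mono) auto
  with eps rho show ?thesis
    by linarith
qed

lemma inverse_rho_eps_large: "10000 < 1 / (\<rho> * \<epsilon>)"
  using rho_eps_small rho eps by (simp add: field_simps)

lemma exponent_bounds: "0 < \<rho> * \<epsilon>\<^sup>2" "\<rho> * \<epsilon>\<^sup>2 < 1 / 2"
proof -
  have "\<rho> * \<epsilon>\<^sup>2 = (\<rho> * \<epsilon>) * \<epsilon>"
    by (simp add: power2_eq_square)
  also have "\<dots> \<le> (\<rho> * \<epsilon>) * 1"
    using rho eps by (intro mult_left_mono) auto
  finally show "\<rho> * \<epsilon>\<^sup>2 < 1 / 2"
    using rho_eps_small by linarith
qed (use rho eps in simp)

lemma q_ge: "4 / (\<rho> * \<epsilon>) \<le> of_int q"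
proof -
  have "of_int q powr (3 * (\<rho> * \<epsilon>\<^sup>2) / 4) \<le> of_int q powr 1"
    using exponent_bounds q_pos by (intro powr_mono) auto
  with q_large q_pos show ?thesis
    by simp
qed

lemma Q_ge: "4 / (\<rho> * \<epsilon>) \<le> Q"
proof -
  have "of_int q powr (3 * (\<rho> * \<epsilon>\<^sup>2) / 4) \<le> Q"
    using exponent_bounds q_pos by (intro powr_mono) auto
  with q_large show ?thesis
    by simp
qed

lemma vQ_small: "4 * of_int v * Q < of_int q / 10000"
proof -
  define c where "c = \<rho> * \<epsilon>\<^sup>2"
  have q0: "0 < real_of_int q"
    using q_pos by simp
  have "of_int v * Q < of_int q powr (c / 4) * Q"
    using v(2) q0 by (simp add: c_def)
  also have "of_int q powr (c / 4) * Q = of_int q powr 1 / of_int q powr (3 * c / 4)"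
    unfolding c_def[symmetric] powr_add[symmetric] powr_diff[symmetric] by (simp add: algebra_simps)
  also have "\<dots> = of_int q / of_int q powr (3 * c / 4)"
    using q0 by simp
  also have "\<dots> \<le> of_int q / (4 / (\<rho> * \<epsilon>))"
    using q_large q0 rho eps by (intro divide_left_mono) (auto simp: c_def)
  finally have "4 * of_int v * Q < \<rho> * \<epsilon> * of_int q"
    using rho eps by (simp add: field_simps)
  moreover have "\<rho> * \<epsilon> * of_int q < 1 / 10000 * of_int q"
    using rho_eps_small q0 by (rule mult_strict_right_mono)
  ultimately show ?thesis
    by simp
qed

lemma v_lt_q: "v < q"
proof -
  have "of_int q powr (\<rho> * \<epsilon>\<^sup>2 / 4) \<le> of_int q powr 1"
    using exponent_bounds q_pos by (intro powr_mono) auto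
  with v(2) q_pos show ?thesis
    by simp
qed

lemma not_dvd_4v: "\<not> q dvd 4 * v"
proof -
  have "4 * (1 / (\<rho> * \<epsilon>)) \<le> of_int q"
    using q_ge by simp
  with inverse_rho_eps_large have "\<not> q dvd 4"
    by (auto dest: zdvd_imp_le)
  moreover have "\<not> q dvd v"
    using v(1) v_lt_q by (auto dest: zdvd_imp_le)
  ultimately show ?thesis
    using q_prime by (simp add: prime_dvd_mult_iff)
qed

lemma q_odd:
  obtains m where "q = 2 * m + 1" "0 \<le> m"
proof -
  have "4 * (1 / (\<rho> * \<epsilon>)) \<le> of_int q"
    using q_ge by simp
  with inverse_rho_eps_large have "odd q"
    using q_prime by (intro prime_odd_int) auto
  then obtain m where "q = 2 * m + 1"
    by (rule oddE)
  with q_pos show thesis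
    by (intro that) auto
qed

lemma a_bounds: "\<bar>real_of_int a\<bar> \<le> of_int q / 2 + 1 / 2" "5 * of_int v * Q - 1 / 2 \<le> \<bar>real_of_int a\<bar>"
proof -
  have q0: "0 < real_of_int q"
    using q_pos by simp
  have "of_int a - of_int q * u = of_int q * (of_int a / of_int q - u)"
    using q0 by (simp add: field_simps)
  then have "\<bar>of_int a - of_int q * u\<bar> = of_int q * \<bar>u - of_int a / of_int q\<bar>"
    using q0 by (simp add: abs_mult abs_minus_commute)
  also have "\<dots> \<le> of_int q * (1 / (2 * of_int q))"
    using u(3) q0 by (intro mult_left_mono) auto
  finally have a: "\<bar>of_int a - of_int q * u\<bar> \<le> 1 / 2"
    using q0 by simp
  have qu: "\<bar>of_int q * u\<bar> = of_int q * \<bar>u\<bar>"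
    using q0 by (simp add: abs_mult)
  have "of_int q * \<bar>u\<bar> \<le> of_int q * (1 / 2)"
    using u(2) q0 by (intro mult_left_mono) auto
  with a qu show "\<bar>real_of_int a\<bar> \<le> of_int q / 2 + 1 / 2"
    by linarith
  have "of_int q * (5 * of_int v * of_int q powr (- \<rho> * \<epsilon>\<^sup>2)) \<le> of_int q * \<bar>u\<bar>"
    using u(1) q0 by (intro mult_left_mono) auto
  moreover have "of_int q * (5 * of_int v * of_int q powr (- \<rho> * \<epsilon>\<^sup>2)) = 5 * of_int v * Q"
    using q0 by (simp add: powr_diff powr_minus divide_inverse)
  ultimately show "5 * of_int v * Q - 1 / 2 \<le> \<bar>real_of_int a\<bar>"
    using a qu by linarith
qed

lemma norm_fT_W_small_shift_le:
  assumes "\<bar>real_of_int r\<bar> \<le> 1 / (\<rho> * \<epsilon>)"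
  shows "norm (fT (W q S h k v) (of_int (a + r) / of_int q)) \<le> \<epsilon> * real (card S)"
proof (rule norm_fT_W_shift_le[OF q_prime S(1) _ not_dvd_4v _ spectrum])
  show "\<not> q dvd h"
    using h by (auto dest: zdvd_imp_le)
  show "0 < v"
    using v(1) by simp
  define X where "X = 1 / (\<rho> * \<epsilon>)"
  have X: "10000 < X" "4 * X \<le> Q" "4 * X \<le> of_int q" "\<bar>of_int r\<bar> \<le> X"
    using inverse_rho_eps_large Q_ge q_ge assms by (simp_all add: X_def)
  have "Q \<le> of_int v * Q"
    using mult_right_mono[of 1 "of_int v" Q] v(1) by simp
  with a_bounds(2) X show "4 * of_int v * Q + \<bar>of_int r\<bar> < \<bar>of_int a\<bar>"
    by linarith
  from a_bounds(1) vQ_small X show "\<bar>of_int a\<bar> + \<bar>of_int r\<bar> + 4 * of_int v * Q < of_int q"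
    by linarith
qed

lemma norm_fT_W_interval_le:
  assumes R: "1 \<le> R" "real R \<le> 1 / (\<rho> * \<epsilon>)"
  shows "of_int q * norm (fT (W q S h k v \<inter> {N + 1..N + H}) (of_int a / of_int q))
    \<le> (2 * real R + 1) * of_int H * (\<epsilon> * real (card S)) + of_int q * sqrt (of_int q * real (card S) / (2 * real R))"
proof -
  obtain m where m: "q = 2 * m + 1" "0 \<le> m"
    using q_odd .
  define F D where "F r = fT (W q S h k v) (of_int (a + r) / of_int q)"
    and "D r = fT {N + 1..N + H} (- of_int r / of_int q)" for r
  have W_sub: "W q S h k v \<subseteq> {0..<q}"
    unfolding W_def using q_pos by auto
  have I_sub: "{N + 1..N + H} \<subseteq> {0..<q}"
    using interval by auto
  have "of_int q * norm (fT (W q S h k v \<inter> {N + 1..N + H}) (of_int a / of_int q))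
      = norm (\<Sum>r\<in>{-m..m}. F r * D r)"
    using sum_fT_mult_fT[OF m W_sub I_sub, of a 0] q_pos by (simp add: F_def D_def norm_mult)
  also have "\<dots> \<le> (\<Sum>r\<in>{-m..m}. norm (D r) * norm (F r))"
    by (rule order_trans[OF norm_sum]) (simp add: norm_mult mult.commute)
  also have "\<dots> \<le> (2 * real R + 1) * of_int H * (\<epsilon> * real (card S))
      + of_int q * sqrt (of_int q * real (card S) / (2 * real R))"
  proof (rule sum_norm_mult_le_head_tail[OF m(2) R(1)])
    show "0 \<le> real_of_int q"
      using q_pos by simp
    show "norm (D r) \<le> of_int H" for r
      using norm_fT_le_card[of "{N + 1..N + H}"] interval by (simp add: D_def)
    show "norm (D r) \<le> of_int q / (2 * \<bar>of_int r\<bar>)" if "r \<in> {-m..m}" "r \<noteq> 0" for r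
      unfolding D_def using m(1) that by (rule norm_fT_atLeastAtMost_residue_le)
    show "norm (F r) \<le> \<epsilon> * real (card S)" if "\<bar>r\<bar> \<le> int R" for r
    proof -
      from that have "\<bar>real_of_int r\<bar> \<le> real R"
        by linarith
      with R(2) show ?thesis
        unfolding F_def by (intro norm_fT_W_small_shift_le) linarith
    qed
    have "card (W q S h k v) \<le> card S"
      unfolding W_def by (rule card_image_le) (use S(1) in \<open>auto intro: finite_subset\<close>)
    then show "(\<Sum>r\<in>{-m..m}. (norm (F r))\<^sup>2) \<le> of_int q * real (card S)"
      using sum_norm_fT_square[OF m W_sub, of a] q_pos by (simp add: F_def)
  qed
  finally show ?thesis .
qed

lemma norm_fT_W_interval_lt_if_small_theta:
  fixes \<theta> :: real
  assumes "0 < \<theta>" "of_int H * \<epsilon> = \<rho> * of_int q * \<theta> ^ 3" "\<theta>\<^sup>2 < 2 * \<epsilon>"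
  shows "norm (fT (W q S h k v \<inter> {N + 1..N + H}) (of_int a / of_int q)) < 2 * real (card S) * \<theta>"
proof -
  have "norm (fT (W q S h k v \<inter> {N + 1..N + H}) (of_int a / of_int q)) \<le> card (W q S h k v \<inter> {N + 1..N + H})"
    by (rule norm_fT_le_card)
  also have "\<dots> \<le> card {N + 1..N + H}"
    by (intro of_nat_mono card_mono) auto
  also have "\<dots> = of_int H"
    using interval by simp
  finally have le_H: "norm (fT (W q S h k v \<inter> {N + 1..N + H}) (of_int a / of_int q)) \<le> of_int H" .
  have "\<rho> * of_int q * \<theta> * \<theta>\<^sup>2 < \<rho> * of_int q * \<theta> * (2 * \<epsilon>)"
    using assms(1,3) rho q_pos by (intro mult_strict_left_mono) auto
  then have "of_int H * \<epsilon> < 2 * \<rho> * of_int q * \<theta> * \<epsilon>"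
    using assms(2) by (simp add: power2_eq_square power3_eq_cube algebra_simps)
  then have "of_int H < 2 * \<rho> * of_int q * \<theta>"
    using eps by simp
  also have "\<dots> \<le> 2 * real (card S) * \<theta>"
    using S(2) assms(1) by simp
  finally show ?thesis
    using le_H by linarith
qed

lemma norm_fT_W_interval_lt_if_large_theta:
  fixes \<theta> :: real
  assumes "0 < \<theta>" "\<theta> < 1 / 20" "of_int H * \<epsilon> = \<rho> * of_int q * \<theta> ^ 3" "2 * \<epsilon> \<le> \<theta>\<^sup>2"
  shows "norm (fT (W q S h k v \<inter> {N + 1..N + H}) (of_int a / of_int q)) < 2 * real (card S) * \<theta>"
proof -
  \<comment> \<open>R balances the head (2R + 1) H eps |S| against the tail q sqrt (q |S| / 2R).\<close>
  define y where "y = 1 / (3 * \<rho> * \<theta>\<^sup>2)"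
  define R where "R = nat \<lceil>y\<rceil>"
  have y: "0 < y"
    using rho assms(1) by (simp add: y_def)
  have R: "y \<le> real R" "real R \<le> y + 1"
    using y by (auto simp: R_def)
  have "y \<le> 1 / (6 * \<rho> * \<epsilon>)"
    unfolding y_def using rho eps assms(1,4) by (intro divide_left_mono) auto
  also have "\<dots> \<le> 1 / (\<rho> * \<epsilon>) - 1"
    using inverse_rho_eps_large rho eps by (simp add: field_simps)
  finally have R_le: "real R \<le> 1 / (\<rho> * \<epsilon>)"
    using R by linarith
  have "1 \<le> R"
    using R y by linarith
  then have "of_int q * norm (fT (W q S h k v \<inter> {N + 1..N + H}) (of_int a / of_int q))
      \<le> (2 * real R + 1) * of_int H * (\<epsilon> * real (card S)) + of_int q * sqrt (of_int q * real (card S) / (2 * real R))"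
    using R_le by (rule norm_fT_W_interval_le)
  also have "\<dots> < 2 * real (card S) * \<theta> * of_int q"
    using rho q_pos S(2) assms(1-3) R unfolding y_def by (intro head_tail_estimate_lt) auto
  finally show ?thesis
    using q_pos by (simp add: mult.commute)
qed

theorem W_interval_sum_lt:
  "cmod (\<Sum>s\<in>{s\<in>W q S h k v. N + 1 \<le> s \<and> s \<le> N + H}. e (of_int s * of_int a / of_int q))
     < 2 * real (card S) * (\<epsilon> * of_int H / (\<rho> * of_int q)) powr (1/3)"
proof -
  define x \<theta> where "x = \<epsilon> * of_int H / (\<rho> * of_int q)" and "\<theta> = x powr (1/3)"
  have "x \<le> \<epsilon> / \<rho>"
    using eps rho q_pos interval by (auto simp: x_def field_simps)
  also have "\<dots> < 1 / 10000"
    using eps rho by (simp add: field_simps)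
  finally have x: "0 < x" "x < 1 / 10000"
    using eps rho q_pos interval by (auto simp: x_def)
  have \<theta>: "0 < \<theta>" "\<theta> ^ 3 = x"
    using x(1) by (simp_all add: \<theta>_def powr_realpow[symmetric] powr_powr)
  have "\<theta> < 1 / 20"
  proof (rule ccontr)
    assume "\<not> \<theta> < 1 / 20"
    then have "(1 / 20) ^ 3 \<le> \<theta> ^ 3"
      by (intro power_mono) auto
    with \<theta>(2) x(2) show False
      by (simp add: power3_eq_cube)
  qed
  moreover have "of_int H * \<epsilon> = \<rho> * of_int q * \<theta> ^ 3"
    using \<theta>(2) rho q_pos by (simp add: x_def field_simps)
  ultimately have "norm (fT (W q S h k v \<inter> {N + 1..N + H}) (of_int a / of_int q)) < 2 * real (card S) * \<theta>"
    using norm_fT_W_interval_lt_if_small_theta norm_fT_W_interval_lt_if_large_theta \<theta>(1)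
    by (metis linorder_not_less)
  moreover have "(\<Sum>s\<in>{s\<in>W q S h k v. N + 1 \<le> s \<and> s \<le> N + H}. e (of_int s * of_int a / of_int q))
      = fT (W q S h k v \<inter> {N + 1..N + H}) (of_int a / of_int q)"
    unfolding fT_def by (rule sum.cong) auto
  ultimately show ?thesis
    by (simp add: \<theta>_def x_def)
qed

end

theorem lemma4:
  fixes \<rho>\<^sub>1 :: real
  assumes "0 < \<rho>\<^sub>1" "\<rho>\<^sub>1 < 1"
  shows "\<exists>\<epsilon>\<^sub>0. 0 < \<epsilon>\<^sub>0 \<and> \<epsilon>\<^sub>0 < 1 \<and>
    (\<forall>\<epsilon>::real. 0 < \<epsilon> \<and> \<epsilon> < \<epsilon>\<^sub>0 \<longrightarrow>
      (\<exists>q\<^sub>0::int. \<forall>q::int. prime q \<and> q \<ge> q\<^sub>0 \<longrightarrow>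
        (\<forall>S h k v u a N H.
           S \<subseteq> {0..<q} \<and> real (card S) \<ge> \<rho>\<^sub>1 * of_int q \<and>
           1 \<le> h \<and> h \<le> q - 1 \<and>
           (\<forall>b::int. \<bar>real_of_int b\<bar> \<le> real_of_int q / 2 \<and>
              cmod (fT ((\<lambda>s. (h * s) mod q) ` S) (of_int b / of_int q)) > \<epsilon> * real (card S)
              \<longrightarrow> \<bar>of_int b\<bar> < (of_int q) powr (1 - \<rho>\<^sub>1 * \<epsilon>\<^sup>2)) \<and>
           1 \<le> v \<and> of_int v < (of_int q) powr (\<rho>\<^sub>1 * \<epsilon>\<^sup>2 / 4) \<and>
           5 * of_int v * (of_int q) powr (- \<rho>\<^sub>1 * \<epsilon>\<^sup>2) \<le> \<bar>u::real\<bar> \<and> \<bar>u\<bar> \<le> 1/2 \<and>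
           \<bar>u - of_int a / of_int q\<bar> \<le> 1 / (2 * of_int q) \<and>
           0 \<le> N \<and> 1 \<le> H \<and> N + H \<le> q - 1
           \<longrightarrow>
           cmod (\<Sum>s\<in>{s\<in>W q S h k v. N + 1 \<le> s \<and> s \<le> N + H}.
                    e (of_int s * of_int a / of_int q))
             < 2 * real (card S) * (\<epsilon> * of_int H / (\<rho>\<^sub>1 * of_int q)) powr (1/3))))"
proof (intro exI[of _ "\<rho>\<^sub>1 / 10000"] conjI allI impI, goal_cases)
  case (3 \<epsilon>)
  define q\<^sub>0 :: int where "q\<^sub>0 = \<lceil>(4 / (\<rho>\<^sub>1 * \<epsilon>)) powr (4 / (3 * (\<rho>\<^sub>1 * \<epsilon>\<^sup>2)))\<rceil>"
  have q_large: "4 / (\<rho>\<^sub>1 * \<epsilon>) \<le> of_int q powr (3 * (\<rho>\<^sub>1 * \<epsilon>\<^sup>2) / 4)" if "q\<^sub>0 \<le> q" for q :: int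
  proof (rule le_powr_if_powr_inverse_le)
    have "(4 / (\<rho>\<^sub>1 * \<epsilon>)) powr (4 / (3 * (\<rho>\<^sub>1 * \<epsilon>\<^sup>2))) \<le> of_int q\<^sub>0"
      by (simp add: q\<^sub>0_def)
    with that show "(4 / (\<rho>\<^sub>1 * \<epsilon>)) powr (1 / (3 * (\<rho>\<^sub>1 * \<epsilon>\<^sup>2) / 4)) \<le> of_int q"
      by simp
  qed (use assms 3 in auto)
  show ?case
    by (intro exI[of _ q\<^sub>0] allI impI, elim conjE, rule W_sum_setting.W_interval_sum_lt, unfold_locales)
      (use assms 3 q_large in auto)
qed (use assms in auto)

end
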